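(* Let $B\in\mathbb{R}^{n\times n}$ be strictly diagonally row-dominant with positive diagonal entries and negative off-diagonal entries, $M=B^{-1}$, $P,R$ diagonal with strictly positive diagonal entries, $\beta>0$, and $w\in\mathbb{R}^n$. Assume (A1) $\displaystyle\max_i \frac{M_i w-1}{M_i\mathbf{1}} < \min_j \frac{M_j w+1}{M_j\mathbf{1}}$, and (A2) either $\mathrm{dz}(Mw)=0$, or the set $\mathcal{K}=\arg\max_i \left|\frac{\mathrm{dz}(M_i w)}{M_i\mathbf{1}}\right|$ is a singleton $\{k\}$. Then the closed-loop system $$\dot x=-x+B\,\mathrm{sat}(u)+w,\qquad \dot z=x+\beta\mathbf{1}\mathbf{1}^T\mathrm{dz}(u),\qquad u=-Px-Rz$$ has a unique equilibrium $(x^0,z^0)$, namely the one with $z^0=-R^{-1}(u^0+Px^0)$ and $$x^0=\mathbf{1}\,\frac{\mathrm{dz}(M_k w)}{M_k\mathbf{1}},\qquad u^0_k=-\mathrm{sat}(M_k w)-\frac{\mathrm{dz}(M_k w)}{\beta M_k\mathbf{1}},\qquad u^0_i=-M_i w+\frac{M_i\mathbf{1}}{M_k\mathbf{1}}\mathrm{dz}(M_k w)\ \ (i\neq k),$$ where $k\in\mathcal{K}$ (in the case $\mathrm{dz}(Mw)=0$ this gives $x^0=0$, $u^0=-Mw$ for any choice of $k$).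
   Context: $\mathbf{1}$ denotes the all-ones column vector in $\mathbb{R}^n$; $A_i$ denotes the $i$-th row of a matrix $A$. $\mathrm{sat}(v)=\max(\min(v,1),-1)$ and $\mathrm{dz}(v)=v-\mathrm{sat}(v)$, applied componentwise. An equilibrium is a pair $(x^0,z^0)$ with $u^0=-Px^0-Rz^0$ satisfying $0=-x^0+B\,\mathrm{sat}(u^0)+w$ and $0=x^0+\beta\mathbf{1}\mathbf{1}^T\mathrm{dz}(u^0)$. Under the hypotheses on $B$, $M=B^{-1}$ is entrywise nonnegative and $M_i\mathbf{1}>0$ for all $i$. *)

theory Defs
  imports "HOL-Analysis.Analysis"
begin

definition sat :: "real \<Rightarrow> real" where
  "sat v = max (min v 1) (-1)"

definition dz :: "real \<Rightarrow> real" where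
  "dz v = v - sat v"

definition satv :: "real ^ 'n \<Rightarrow> real ^ 'n" where
  "satv v = (\<chi> i. sat (v $ i))"

definition dzv :: "real ^ 'n \<Rightarrow> real ^ 'n" where
  "dzv v = (\<chi> i. dz (v $ i))"

definition ones :: "real ^ 'n" where
  "ones = (\<chi> i. 1)"

definition ones_mat :: "real ^ 'n ^ 'n" where
  "ones_mat = (\<chi> i j. 1)"

definition is_equilibrium ::
  "real^'n^'n \<Rightarrow> real^'n^'n \<Rightarrow> real^'n^'n \<Rightarrow> real \<Rightarrow> real^'n \<Rightarrow> real^'n \<Rightarrow> real^'n \<Rightarrow> bool" where
  "is_equilibrium B P R \<beta> w x z \<longleftrightarrow>
     (let u = - (P *v x) - (R *v z) in
        0 = - x + B *v satv u + w \<and>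
        0 = x + \<beta> *\<^sub>R (ones_mat *v dzv u))"

definition strictly_row_dominant :: "real^'n^'n \<Rightarrow> bool" where
  "strictly_row_dominant B \<longleftrightarrow>
     (\<forall>i. \<bar>B $ i $ i\<bar> > (\<Sum>j\<in>UNIV - {i}. \<bar>B $ i $ j\<bar>))"

end

theory Submission
  imports Defs
begin

text \<open>
  At an equilibrium the integrator forces \<open>x = c \<one>\<close> for the scalar \<open>c = -\<beta> \<Sum>\<^sub>j dz(u\<^sub>j)\<close>, and
  then \<open>sat u = c M\<one> - Mw\<close>. Coordinatewise this says that \<open>c\<close> lies in every interval
  \<open>[L\<^sub>j, U\<^sub>j] = [(M\<^sub>jw - 1)/M\<^sub>j\<one>, (M\<^sub>jw + 1)/M\<^sub>j\<one>]\<close> (their intersection is nonempty by (A1),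
  since \<open>M\<one> > 0\<close>), and that \<open>dz(u\<^sub>j)\<close> can be positive only if \<open>c = U\<^sub>j\<close> and negative only if
  \<open>c = L\<^sub>j\<close>. The sign coupling between \<open>c\<close> and \<open>\<Sum> dz(u\<^sub>j)\<close> then forces \<open>c\<close> to be the point
  of the intersection nearest to \<open>0\<close>. Since \<open>dz(M\<^sub>jw)/M\<^sub>j\<one>\<close> is the point of \<open>[L\<^sub>j, U\<^sub>j]\<close>
  nearest to \<open>0\<close>, that point is \<open>dz(M\<^sub>kw)/M\<^sub>k\<one>\<close> for every maximiser \<open>k\<close> of its modulus. The
  mass \<open>-c/\<beta>\<close> of \<open>dz(u)\<close> can only sit at indices where \<open>c\<close> is an endpoint, and by (A2) the
  only such index is \<open>k\<close>.
\<close>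

lemma sat_add_dz: "sat v + dz v = v"
  by (simp add: dz_def)

lemma sat_dz_add_iff:
  "sat (s + d) = s \<and> dz (s + d) = d \<longleftrightarrow> \<bar>s\<bar> \<le> 1 \<and> (0 < d \<longrightarrow> s = 1) \<and> (d < 0 \<longrightarrow> s = -1)"
  unfolding dz_def sat_def by auto

lemma affine_abs_le_one_iff:
  "0 < e \<Longrightarrow> \<bar>c * e - m\<bar> \<le> 1 \<longleftrightarrow> (m - 1) / e \<le> c \<and> c \<le> (m + 1) / e"
  for c e m :: real
  by (auto simp: pos_divide_le_eq pos_le_divide_eq abs_le_iff)

lemma affine_eq_one_iff: "0 < e \<Longrightarrow> c * e - m = 1 \<longleftrightarrow> c = (m + 1) / e"
  for c e m :: real
  by (auto simp: field_simps)

lemma affine_eq_minus_one_iff: "0 < e \<Longrightarrow> c * e - m = -1 \<longleftrightarrow> c = (m - 1) / e"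
  for c e m :: real
  by (auto simp: field_simps)

definition closest_to_zero :: "real \<Rightarrow> real \<Rightarrow> real" where
  "closest_to_zero a b = max a (min b 0)"

lemma closest_to_zero_cases:
  assumes "a \<le> b"
  obtains "b < 0" "closest_to_zero a b = b"
    | "0 < a" "closest_to_zero a b = a"
    | "a \<le> 0" "0 \<le> b" "closest_to_zero a b = 0"
  using assms that unfolding closest_to_zero_def by linarith

lemma closest_to_zero_upper: "a \<le> b \<Longrightarrow> b \<le> 0 \<Longrightarrow> closest_to_zero a b = b"
  and closest_to_zero_lower: "0 \<le> a \<Longrightarrow> closest_to_zero a b = a"
  unfolding closest_to_zero_def by auto

lemma dz_div_eq_closest_to_zero:
  "0 < e \<Longrightarrow> dz m / e = closest_to_zero ((m - 1) / e) ((m + 1) / e)"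
  by (auto simp: closest_to_zero_def dz_def sat_def max_def min_def field_simps)

lemma ex_argmax_finite:
  fixes f :: "'i::finite \<Rightarrow> 'a::linorder"
  obtains i where "\<forall>j. f j \<le> f i"
proof -
  have "Max (range f) \<in> range f" by (intro Max_in) auto
  then obtain i where "Max (range f) = f i" by blast
  moreover have "f j \<le> Max (range f)" for j by (rule Max_ge) auto
  ultimately have "\<forall>j. f j \<le> f i" by simp
  then show ?thesis by (rule that)
qed

lemma argmax_singleton_imp_strict:
  fixes f :: "'i \<Rightarrow> 'a::linorder"
  assumes "{i. \<forall>j. f j \<le> f i} = {k'}" and "\<forall>j. f j \<le> f k" and "j \<noteq> k"
  shows "f j < f k"
proof -
  from assms(1,2) have "k = k'" by auto
  with assms(1,3) have "j \<notin> {i. \<forall>j. f j \<le> f i}" by simp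
  then obtain i where "f j < f i" by (auto simp: not_le)
  with assms(2) show ?thesis by (meson less_le_trans)
qed

lemma Max_range_less_Min_range:
  fixes f g :: "'i::finite \<Rightarrow> 'a::linorder"
  assumes "Max (range f) < Min (range g)"
  shows "f i < g j"
proof -
  have "f i \<le> Max (range f)" and "Min (range g) \<le> g j" by (auto intro: Max_ge Min_le)
  with assms show ?thesis by (meson le_less_trans less_le_trans)
qed

subsection \<open>Strictly diagonally dominant matrices\<close>

lemma matrix_vector_mult_component_split:
  fixes A :: "'a::comm_semiring_1^'n^'n"
  shows "(A *v v) $ i = A$i$i * v$i + (\<Sum>j\<in>UNIV - {i}. A$i$j * v$j)"
  by (simp add: matrix_vector_mult_def sum.remove[of UNIV i])

lemma matrix_vector_mult_uminus_right: "A *v (- v) = - (A *v v)"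
  for A :: "'a::comm_ring_1^'n^'m"
  by (simp add: vec_eq_iff matrix_vector_mult_def sum_negf)

lemma strictly_row_dominant_imp_invertible:
  fixes A :: "real^'n^'n"
  assumes dom: "strictly_row_dominant A"
  shows "invertible A"
proof -
  have "v = 0" if Av: "A *v v = 0" for v
  proof (rule ccontr)
    assume "v \<noteq> 0"
    then obtain j0 where "v$j0 \<noteq> 0" by (auto simp: vec_eq_iff)
    obtain i where imax: "\<forall>j. \<bar>v$j\<bar> \<le> \<bar>v$i\<bar>" using ex_argmax_finite[of "\<lambda>j. \<bar>v$j\<bar>"] by blast
    with \<open>v$j0 \<noteq> 0\<close> have vi: "0 < \<bar>v$i\<bar>" by (metis zero_less_abs_iff order_less_le_trans)
    have "A$i$i * v$i = - (\<Sum>j\<in>UNIV - {i}. A$i$j * v$j)"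
      using Av matrix_vector_mult_component_split[of A v i] by (simp add: eq_neg_iff_add_eq_0)
    then have "\<bar>A$i$i\<bar> * \<bar>v$i\<bar> = \<bar>\<Sum>j\<in>UNIV - {i}. A$i$j * v$j\<bar>"
      by (simp add: abs_mult[symmetric])
    also have "\<dots> \<le> (\<Sum>j\<in>UNIV - {i}. \<bar>A$i$j\<bar> * \<bar>v$i\<bar>)"
      by (rule order_trans[OF sum_abs sum_mono]) (simp add: abs_mult imax mult_left_mono)
    also have "\<dots> = (\<Sum>j\<in>UNIV - {i}. \<bar>A$i$j\<bar>) * \<bar>v$i\<bar>"
      by (rule sum_distrib_right[symmetric])
    also have "\<dots> < \<bar>A$i$i\<bar> * \<bar>v$i\<bar>"
      using dom vi unfolding strictly_row_dominant_def by (simp add: mult_strict_right_mono)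
    finally show False by simp
  qed
  then show ?thesis
    using invertible_left_inverse matrix_left_invertible_ker by metis
qed

lemma diagonal_imp_strictly_row_dominant:
  fixes A :: "real^'n^'n"
  assumes "\<forall>i j. i \<noteq> j \<longrightarrow> A$i$j = 0" and "\<forall>i. A$i$i \<noteq> 0"
  shows "strictly_row_dominant A"
  using assms unfolding strictly_row_dominant_def by simp

lemma matrix_inv_cancel_left: "invertible A \<Longrightarrow> matrix_inv A *v (A *v x) = x"
  and matrix_inv_cancel_right: "invertible A \<Longrightarrow> A *v (matrix_inv A *v x) = x"
  using someI_ex[of "\<lambda>A'. A ** A' = mat 1 \<and> A' ** A = mat 1"]
  unfolding matrix_inv_def invertible_def by (auto simp: matrix_vector_mul_assoc)

lemma strictly_row_dominant_Z_matrix_solution_pos: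
  fixes A :: "real^'n^'n"
  assumes dom: "strictly_row_dominant A" and diag: "\<forall>i. 0 < A$i$i"
    and off: "\<forall>i j. i \<noteq> j \<longrightarrow> A$i$j \<le> 0"
    and b: "\<forall>i. 0 < b$i" and Ay: "A *v y = b"
  shows "0 < y$l"
proof -
  obtain i where imin: "\<forall>j. y$i \<le> y$j" using ex_argmax_finite[of "\<lambda>j. - y$j"] by auto
  have "0 < y$i"
  proof (rule ccontr)
    assume nonpos: "\<not> 0 < y$i"
    have off_sum: "(\<Sum>j\<in>UNIV - {i}. A$i$j) = - (\<Sum>j\<in>UNIV - {i}. \<bar>A$i$j\<bar>)"
      unfolding sum_negf[symmetric] using off by (intro sum.cong) auto
    have "b$i = A$i$i * y$i + (\<Sum>j\<in>UNIV - {i}. A$i$j * y$j)"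
      using Ay matrix_vector_mult_component_split[of A y i] by simp
    also have "\<dots> \<le> A$i$i * y$i + (\<Sum>j\<in>UNIV - {i}. A$i$j * y$i)"
      by (intro add_left_mono sum_mono) (simp add: imin off mult_left_mono_neg)
    also have "\<dots> = A$i$i * y$i + (\<Sum>j\<in>UNIV - {i}. A$i$j) * y$i"
      by (simp add: sum_distrib_right)
    also have "\<dots> = (A$i$i - (\<Sum>j\<in>UNIV - {i}. \<bar>A$i$j\<bar>)) * y$i"
      by (simp add: off_sum algebra_simps)
    also have "\<dots> \<le> 0"
    proof -
      have "0 < A$i$i - (\<Sum>j\<in>UNIV - {i}. \<bar>A$i$j\<bar>)"
        using dom diag unfolding strictly_row_dominant_def by (metis abs_of_pos diff_gt_0_iff_gt)
      with nonpos show ?thesis by (simp add: mult_nonneg_nonpos)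
    qed
    finally show False using b by (meson not_le)
  qed
  then show ?thesis using imin by (meson less_le_trans)
qed

subsection \<open>The scalar complementarity problem\<close>

text \<open>\<open>c\<close> is the point of \<open>\<Inter>\<^sub>j [L j, U j]\<close> nearest to \<open>0\<close>.\<close>

definition nearest_common_point :: "('i \<Rightarrow> real) \<Rightarrow> ('i \<Rightarrow> real) \<Rightarrow> real \<Rightarrow> bool" where
  "nearest_common_point L U c \<longleftrightarrow>
     (\<forall>j. L j \<le> c \<and> c \<le> U j) \<and> (c < 0 \<longrightarrow> (\<exists>i. c = U i)) \<and> (0 < c \<longrightarrow> (\<exists>i. c = L i))"

definition complementary :: "('i \<Rightarrow> real) \<Rightarrow> ('i \<Rightarrow> real) \<Rightarrow> real \<Rightarrow> ('i \<Rightarrow> real) \<Rightarrow> bool" where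
  "complementary L U c d \<longleftrightarrow>
     (\<forall>j. L j \<le> c \<and> c \<le> U j \<and> (0 < d j \<longrightarrow> c = U j) \<and> (d j < 0 \<longrightarrow> c = L j))"

lemma nearest_common_point_unique:
  assumes "nearest_common_point L U a" and "nearest_common_point L U b"
  shows "a = b"
proof -
  have "\<not> a < b" if a: "nearest_common_point L U a" and b: "nearest_common_point L U b" for a b
  proof
    assume "a < b"
    show False
    proof (cases "b \<le> 0")
      case True
      with \<open>a < b\<close> a obtain i where "a = U i" unfolding nearest_common_point_def by auto
      moreover have "b \<le> U i" using b unfolding nearest_common_point_def by blast
      ultimately show False using \<open>a < b\<close> by simp
    next
      case False
      with b obtain i where "b = L i" unfolding nearest_common_point_def by auto
      moreover have "L i \<le> a" using a unfolding nearest_common_point_def by blast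
      ultimately show False using \<open>a < b\<close> by simp
    qed
  qed
  with assms show ?thesis by (meson linorder_neqE_linordered_idom)
qed

lemma nearest_common_point_argmax:
  fixes L U :: "'i \<Rightarrow> real"
  defines "p \<equiv> \<lambda>j. closest_to_zero (L j) (U j)"
  assumes sep: "\<forall>i j. L i < U j" and argmax: "\<forall>j. \<bar>p j\<bar> \<le> \<bar>p k\<bar>"
  shows "nearest_common_point L U (p k)"
proof -
  have LU: "L j \<le> U j" for j using sep by (simp add: less_imp_le)
  show ?thesis
  proof (cases rule: closest_to_zero_cases[OF LU[of k]])
    case 1
    have "U k \<le> U j" for j
    proof (cases "U j < 0")
      case True
      with LU have "p j = U j" unfolding p_def by (simp add: closest_to_zero_upper)
      with True 1 argmax[rule_format, of j] show ?thesis by (simp add: p_def)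
    qed (use 1 in auto)
    with 1 sep show ?thesis unfolding nearest_common_point_def p_def by (auto intro: less_imp_le)
  next
    case 2
    have "L j \<le> L k" for j
    proof (cases "0 < L j")
      case True
      then have "p j = L j" unfolding p_def by (simp add: closest_to_zero_lower)
      with True 2 argmax[rule_format, of j] show ?thesis by (simp add: p_def)
    qed (use 2 in auto)
    with 2 sep show ?thesis unfolding nearest_common_point_def p_def by (auto intro: less_imp_le)
  next
    case 3
    have "L j \<le> 0 \<and> 0 \<le> U j" for j
      using argmax[rule_format, of j] 3
      by (cases rule: closest_to_zero_cases[OF LU[of j]]) (auto simp: p_def)
    with 3 show ?thesis unfolding nearest_common_point_def p_def by auto
  qed
qed

lemma complementary_sign:
  assumes sep: "\<forall>i j. L i < U j" and comp: "complementary L U c d"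
  shows "(\<forall>j. 0 \<le> d j) \<or> (\<forall>j. d j \<le> 0)"
proof (rule ccontr)
  assume "\<not> ?thesis"
  then obtain i l where "d i < 0" "0 < d l" by (auto simp: not_le)
  with comp have "c = L i" "c = U l" unfolding complementary_def by auto
  with sep show False by (metis less_irrefl)
qed

lemma complementary_imp_nearest_common_point:
  fixes d :: "'i::finite \<Rightarrow> real"
  assumes comp: "complementary L U c d" and \<beta>: "0 < \<beta>" and c: "c = - \<beta> * sum d UNIV"
  shows "nearest_common_point L U c"
proof -
  have "\<exists>i. c = U i" if "c < 0"
  proof -
    from that c \<beta> have "0 < sum d UNIV" by (simp add: zero_less_mult_iff)
    then obtain i where "0 < d i" by (metis not_le sum_nonpos)
    with comp show ?thesis unfolding complementary_def by blast
  qed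
  moreover have "\<exists>i. c = L i" if "0 < c"
  proof -
    from that c \<beta> have "sum d UNIV < 0" by (simp add: mult_less_0_iff)
    then obtain i where "d i < 0" by (metis not_le sum_nonneg)
    with comp show ?thesis unfolding complementary_def by blast
  qed
  ultimately show ?thesis using comp unfolding complementary_def nearest_common_point_def by blast
qed

lemma complementary_support:
  assumes sep: "\<forall>i j. L i < U j" and comp: "complementary L U c d"
    and near: "nearest_common_point L U c" and "d j \<noteq> 0"
  shows "closest_to_zero (L j) (U j) = c"
proof (cases "0 < d j")
  case True
  with comp have c: "c = U j" unfolding complementary_def by blast
  have "\<not> 0 < c"
  proof
    assume "0 < c"
    with near obtain i where "c = L i" unfolding nearest_common_point_def by blast
    with sep c show False by (metis less_irrefl)
  qed
  moreover have "L j \<le> U j" using sep by (simp add: less_imp_le)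
  ultimately show ?thesis using c closest_to_zero_upper by simp
next
  case False
  with \<open>d j \<noteq> 0\<close> comp have c: "c = L j" unfolding complementary_def by auto
  have "\<not> c < 0"
  proof
    assume "c < 0"
    with near obtain i where "c = U i" unfolding nearest_common_point_def by blast
    with sep c show False by (metis less_irrefl)
  qed
  with c show ?thesis by (simp add: closest_to_zero_lower)
qed

lemma sum_eq_0_same_sign:
  fixes d :: "'i::finite \<Rightarrow> real"
  assumes "(\<forall>j. 0 \<le> d j) \<or> (\<forall>j. d j \<le> 0)" and "sum d UNIV = 0"
  shows "d j = 0"
  using assms(1)
proof
  assume "\<forall>j. 0 \<le> d j"
  with assms(2) show ?thesis by (simp add: sum_nonneg_eq_0_iff)
next
  assume "\<forall>j. d j \<le> 0"
  moreover have "sum (\<lambda>j. - d j) UNIV = 0" using assms(2) by (simp add: sum_negf)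
  ultimately show ?thesis by (simp add: sum_nonneg_eq_0_iff)
qed

lemma complementary_argmax:
  fixes L U :: "'i::finite \<Rightarrow> real"
  defines "p \<equiv> \<lambda>j. closest_to_zero (L j) (U j)"
  assumes sep: "\<forall>i j. L i < U j" and \<beta>: "0 < \<beta>" and argmax: "\<forall>j. \<bar>p j\<bar> \<le> \<bar>p k\<bar>"
  shows "complementary L U (p k) (\<lambda>j. if j = k then - p k / \<beta> else 0)"
    and "p k = - \<beta> * (\<Sum>j\<in>UNIV. if j = k then - p k / \<beta> else 0)"
proof -
  have near: "nearest_common_point L U (p k)"
    using nearest_common_point_argmax[OF sep] argmax unfolding p_def .
  have "L k \<le> U k" using sep by (simp add: less_imp_le)
  then have "(p k < 0 \<longrightarrow> p k = U k) \<and> (0 < p k \<longrightarrow> p k = L k)"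
    unfolding p_def by (cases rule: closest_to_zero_cases) auto
  with near \<beta> show "complementary L U (p k) (\<lambda>j. if j = k then - p k / \<beta> else 0)"
    unfolding complementary_def nearest_common_point_def
    by (auto simp: divide_less_0_iff zero_less_divide_iff)
  show "p k = - \<beta> * (\<Sum>j\<in>UNIV. if j = k then - p k / \<beta> else 0)"
    using \<beta> by simp
qed

text \<open>Uniqueness needs \<open>k\<close> to be the strict maximiser of \<open>\<bar>p\<bar>\<close> unless \<open>p k = 0\<close>:
  every index \<open>j\<close> with \<open>p j = c\<close> could carry part of the mass of \<open>d\<close>.\<close>

lemma complementary_unique:
  fixes L U d :: "'i::finite \<Rightarrow> real"
  defines "p \<equiv> \<lambda>j. closest_to_zero (L j) (U j)"
  assumes sep: "\<forall>i j. L i < U j" and \<beta>: "0 < \<beta>" and argmax: "\<forall>j. \<bar>p j\<bar> \<le> \<bar>p k\<bar>"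
    and strict: "p k \<noteq> 0 \<Longrightarrow> \<forall>j. j \<noteq> k \<longrightarrow> \<bar>p j\<bar> < \<bar>p k\<bar>"
    and comp: "complementary L U c d" and c_sum: "c = - \<beta> * sum d UNIV"
  shows "c = p k" and "d = (\<lambda>j. if j = k then - c / \<beta> else 0)"
proof -
  have near: "nearest_common_point L U c"
    using complementary_imp_nearest_common_point[OF comp \<beta> c_sum] .
  show c: "c = p k"
    using nearest_common_point_unique[OF near] nearest_common_point_argmax[OF sep] argmax
    unfolding p_def by blast
  have "d j = 0" if "j \<noteq> k" for j
  proof (cases "c = 0")
    case True
    with c_sum \<beta> have "sum d UNIV = 0" by simp
    with complementary_sign[OF sep comp] show ?thesis by (rule sum_eq_0_same_sign)
  next
    case False
    show ?thesis
    proof (rule ccontr)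
      assume "d j \<noteq> 0"
      with complementary_support[OF sep comp near] have "p j = c" unfolding p_def .
      with False that c strict show False by auto
    qed
  qed
  moreover from this have "sum d UNIV = d k"
    using sum.remove[of UNIV k d] by simp
  with c_sum \<beta> have "d k = - c / \<beta>" by (simp add: field_simps)
  ultimately show "d = (\<lambda>j. if j = k then - c / \<beta> else 0)" by auto
qed

subsection \<open>Equilibria of the closed loop\<close>

lemma ones_mat_mult: "ones_mat *v v = (\<Sum>j\<in>UNIV. v $ j) *\<^sub>R (ones :: real^'n)"
  by (simp add: vec_eq_iff matrix_vector_mult_def ones_mat_def ones_def)

lemma is_equilibrium_iff_complementary:
  fixes B P R :: "real^'n^'n" and e m :: "real^'n"
  defines "L \<equiv> \<lambda>j. (m$j - 1) / e$j" and "U \<equiv> \<lambda>j. (m$j + 1) / e$j"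
  assumes invB: "invertible B" and invR: "invertible R"
    and Be: "B *v e = ones" and Bm: "B *v m = w" and e_pos: "\<forall>j. 0 < e$j"
  shows "is_equilibrium B P R \<beta> w x z \<longleftrightarrow>
    (\<exists>c d. complementary L U c d \<and> c = - \<beta> * sum d UNIV \<and> x = c *\<^sub>R ones \<and>
       z = - (matrix_inv R *v ((\<chi> j. c * e$j - m$j + d j) + P *v x)))"
proof -
  have coord: "sat (c * e$j - m$j + d) = c * e$j - m$j \<and> dz (c * e$j - m$j + d) = d \<longleftrightarrow>
      L j \<le> c \<and> c \<le> U j \<and> (0 < d \<longrightarrow> c = U j) \<and> (d < 0 \<longrightarrow> c = L j)" for c d j
    using e_pos unfolding sat_dz_add_iff L_def U_def
    by (simp add: affine_abs_le_one_iff affine_eq_one_iff affine_eq_minus_one_iff)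
  have z_iff: "R *v z = - v \<longleftrightarrow> z = - (matrix_inv R *v v)" for v
  proof
    assume "R *v z = - v"
    then have "matrix_inv R *v (R *v z) = - (matrix_inv R *v v)"
      by (simp add: matrix_vector_mult_uminus_right)
    then show "z = - (matrix_inv R *v v)" by (simp add: matrix_inv_cancel_left[OF invR])
  qed (simp add: matrix_vector_mult_uminus_right matrix_inv_cancel_right[OF invR])
  show ?thesis
  proof
    assume "is_equilibrium B P R \<beta> w x z"
    define u where "u = - (P *v x) - (R *v z)"
    define d where "d j = dz (u$j)" for j
    define c where "c = - \<beta> * sum d UNIV"
    have "0 = - x + B *v satv u + w" and "0 = x + \<beta> *\<^sub>R (sum d UNIV *\<^sub>R ones)"
      using \<open>is_equilibrium B P R \<beta> w x z\<close>
      unfolding is_equilibrium_def u_def[symmetric] Let_def ones_mat_mult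
      by (simp_all add: dzv_def d_def)
    then have x: "x = c *\<^sub>R ones" and "B *v satv u = x - w"
      unfolding c_def by (simp add: eq_neg_iff_add_eq_0[symmetric], simp add: algebra_simps)
    then have "B *v satv u = B *v (c *\<^sub>R e - m)"
      by (simp add: Be Bm matrix_vector_mult_diff_distrib matrix_vector_mult_scaleR)
    then have "satv u = c *\<^sub>R e - m"
      by (metis matrix_inv_cancel_left[OF invB])
    then have "sat (u$j) = c * e$j - m$j" for j
      by (simp add: satv_def vec_eq_iff)
    then have "complementary L U c d" and u: "u = (\<chi> j. c * e$j - m$j + d j)"
      using coord[of c j "d j" for j] sat_add_dz[of "u$j" for j] unfolding complementary_def d_def
      by (auto simp: vec_eq_iff)
    moreover have "R *v z = - (u + P *v x)" unfolding u_def by simp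
    then have "z = - (matrix_inv R *v ((\<chi> j. c * e$j - m$j + d j) + P *v x))"
      unfolding z_iff u[symmetric] .
    ultimately show "\<exists>c d. complementary L U c d \<and> c = - \<beta> * sum d UNIV \<and> x = c *\<^sub>R ones \<and>
       z = - (matrix_inv R *v ((\<chi> j. c * e$j - m$j + d j) + P *v x))"
      using x c_def by blast
  next
    assume "\<exists>c d. complementary L U c d \<and> c = - \<beta> * sum d UNIV \<and> x = c *\<^sub>R ones \<and>
       z = - (matrix_inv R *v ((\<chi> j. c * e$j - m$j + d j) + P *v x))"
    then obtain c d where comp: "complementary L U c d" and c: "c = - \<beta> * sum d UNIV"
      and x: "x = c *\<^sub>R ones" and z: "z = - (matrix_inv R *v ((\<chi> j. c * e$j - m$j + d j) + P *v x))"
      by blast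
    have u: "- (P *v x) - (R *v z) = (\<chi> j. c * e$j - m$j + d j)"
      using z unfolding z_iff[symmetric] by simp
    have "sat (c * e$j - m$j + d j) = c * e$j - m$j \<and> dz (c * e$j - m$j + d j) = d j" for j
      using coord comp unfolding complementary_def by blast
    then have "satv (\<chi> j. c * e$j - m$j + d j) = c *\<^sub>R e - m"
      and "dzv (\<chi> j. c * e$j - m$j + d j) = (\<chi> j. d j)"
      by (simp_all add: satv_def dzv_def vec_eq_iff)
    then have "B *v satv (- (P *v x) - (R *v z)) = x - w"
      and "ones_mat *v dzv (- (P *v x) - (R *v z)) = sum d UNIV *\<^sub>R ones"
      unfolding u by (simp_all add: x Be Bm ones_mat_mult matrix_vector_mult_diff_distrib matrix_vector_mult_scaleR)
    then show "is_equilibrium B P R \<beta> w x z"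
      unfolding is_equilibrium_def Let_def by (simp add: x c)
  qed
qed

lemma is_equilibrium_at_argmax:
  fixes B P R :: "real^'n^'n" and e m :: "real^'n"
  assumes invB: "invertible B" and invR: "invertible R"
    and Be: "B *v e = ones" and Bm: "B *v m = w" and e_pos: "\<forall>j. 0 < e$j"
    and sep: "\<forall>i j. (m$i - 1) / e$i < (m$j + 1) / e$j" and \<beta>: "0 < \<beta>"
    and argmax: "\<forall>j. \<bar>dz (m$j) / e$j\<bar> \<le> \<bar>dz (m$k) / e$k\<bar>"
  shows "let x0 = (dz (m$k) / e$k) *\<^sub>R ones;
             u0 = (\<chi> i. if i = k then - sat (m$k) - dz (m$k) / (\<beta> * e$k)
                        else - m$i + (e$i / e$k) * dz (m$k));
             z0 = - (matrix_inv R *v (u0 + P *v x0))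
         in is_equilibrium B P R \<beta> w x0 z0"
proof -
  define L where "L = (\<lambda>j. (m$j - 1) / e$j)"
  define U where "U = (\<lambda>j. (m$j + 1) / e$j)"
  define c where "c = dz (m$k) / e$k"
  define d where "d = (\<lambda>j. if j = k then - c / \<beta> else 0)"
  have q: "dz (m$j) / e$j = closest_to_zero (L j) (U j)" for j
    using e_pos dz_div_eq_closest_to_zero unfolding L_def U_def by auto
  have comp: "complementary L U c d" and c_sum: "c = - \<beta> * sum d UNIV"
    using complementary_argmax[of L U \<beta> k] sep \<beta> argmax
    unfolding c_def d_def q by (simp_all add: L_def U_def)
  have u0: "(\<chi> i. if i = k then - sat (m$k) - dz (m$k) / (\<beta> * e$k)
                          else - m$i + (e$i / e$k) * dz (m$k))
      = (\<chi> j. c * e$j - m$j + d j)"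
    using e_pos[rule_format, of k] \<beta> unfolding c_def d_def
    by (auto simp: vec_eq_iff dz_def field_simps)
  show ?thesis
    unfolding Let_def c_def[symmetric] u0
      is_equilibrium_iff_complementary[OF invB invR Be Bm e_pos, folded L_def U_def]
    using comp c_sum by blast
qed

lemma is_equilibrium_unique:
  fixes B P R :: "real^'n^'n" and e m :: "real^'n"
  assumes invB: "invertible B" and invR: "invertible R"
    and Be: "B *v e = ones" and Bm: "B *v m = w" and e_pos: "\<forall>j. 0 < e$j"
    and sep: "\<forall>i j. (m$i - 1) / e$i < (m$j + 1) / e$j" and \<beta>: "0 < \<beta>"
    and unique_argmax: "dzv m = 0 \<or>
      (\<exists>k. {i. \<forall>j. \<bar>dz (m$j) / e$j\<bar> \<le> \<bar>dz (m$i) / e$i\<bar>} = {k})"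
    and eq: "is_equilibrium B P R \<beta> w x z" and eq': "is_equilibrium B P R \<beta> w x' z'"
  shows "x = x' \<and> z = z'"
proof -
  define L where "L = (\<lambda>j. (m$j - 1) / e$j)"
  define U where "U = (\<lambda>j. (m$j + 1) / e$j)"
  define p where "p = (\<lambda>j. closest_to_zero (L j) (U j))"
  have q: "dz (m$j) / e$j = p j" for j
    using e_pos dz_div_eq_closest_to_zero unfolding p_def L_def U_def by auto
  obtain k where argmax: "\<forall>j. \<bar>p j\<bar> \<le> \<bar>p k\<bar>"
    using ex_argmax_finite[of "\<lambda>j. \<bar>p j\<bar>"] by blast
  have strict: "\<forall>j. j \<noteq> k \<longrightarrow> \<bar>p j\<bar> < \<bar>p k\<bar>" if "p k \<noteq> 0"
  proof -
    from that have "dz (m$k) \<noteq> 0" using q[of k] by force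
    then have "dzv m \<noteq> 0" by (auto simp: dzv_def vec_eq_iff)
    with unique_argmax obtain k' where "{i. \<forall>j. \<bar>p j\<bar> \<le> \<bar>p i\<bar>} = {k'}"
      unfolding q by blast
    from argmax_singleton_imp_strict[of "\<lambda>i. \<bar>p i\<bar>", OF this argmax] show ?thesis by blast
  qed
  note equilibrium = is_equilibrium_iff_complementary[OF invB invR Be Bm e_pos, folded L_def U_def]
  have sep': "\<forall>i j. L i < U j" using sep unfolding L_def U_def .
  have determined: "c = p k \<and> d = (\<lambda>j. if j = k then - c / \<beta> else 0)"
    if "complementary L U c d" and "c = - \<beta> * sum d UNIV" for c d
    using complementary_unique[OF sep' \<beta> _ _ that, of k] argmax strict unfolding p_def by simp
  obtain c d where cd: "complementary L U c d" "c = - \<beta> * sum d UNIV"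
    and xz: "x = c *\<^sub>R ones" "z = - (matrix_inv R *v ((\<chi> j. c * e$j - m$j + d j) + P *v x))"
    using eq unfolding equilibrium by blast
  obtain c' d' where cd': "complementary L U c' d'" "c' = - \<beta> * sum d' UNIV"
    and xz': "x' = c' *\<^sub>R ones" "z' = - (matrix_inv R *v ((\<chi> j. c' * e$j - m$j + d' j) + P *v x'))"
    using eq' unfolding equilibrium by blast
  from determined[OF cd] determined[OF cd'] have "c = c' \<and> d = d'" by auto
  then show ?thesis by (simp add: xz xz')
qed

theorem lemma2:
  fixes B M P R :: "real^'n^'n" and \<beta> :: real and w :: "real^'n"
  assumes dom: "strictly_row_dominant B"
    and diag_pos: "\<forall>i. B $ i $ i > 0"
    and offdiag_neg: "\<forall>i j. i \<noteq> j \<longrightarrow> B $ i $ j < 0"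
    and M_def: "M = matrix_inv B"
    and P_diag: "\<forall>i j. i \<noteq> j \<longrightarrow> P $ i $ j = 0" and P_pos: "\<forall>i. P $ i $ i > 0"
    and R_diag: "\<forall>i j. i \<noteq> j \<longrightarrow> R $ i $ j = 0" and R_pos: "\<forall>i. R $ i $ i > 0"
    and beta_pos: "\<beta> > 0"
    and A1: "Max (range (\<lambda>i. ((M *v w) $ i - 1) / (M *v ones) $ i))
             < Min (range (\<lambda>j. ((M *v w) $ j + 1) / (M *v ones) $ j))"
    and A2: "dzv (M *v w) = 0 \<or>
             (\<exists>k. {i. \<forall>j. \<bar>dz ((M *v w) $ j) / (M *v ones) $ j\<bar>
                          \<le> \<bar>dz ((M *v w) $ i) / (M *v ones) $ i\<bar>} = {k})"
  shows "(\<exists>!p. is_equilibrium B P R \<beta> w (fst p) (snd p)) \<and>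
         (\<forall>k. (dzv (M *v w) = 0 \<or>
               (\<forall>j. \<bar>dz ((M *v w) $ j) / (M *v ones) $ j\<bar>
                     \<le> \<bar>dz ((M *v w) $ k) / (M *v ones) $ k\<bar>)) \<longrightarrow>
            (let x0 = (dz ((M *v w) $ k) / (M *v ones) $ k) *\<^sub>R ones;
                 u0 = (\<chi> i. if i = k
                         then - sat ((M *v w) $ k) - dz ((M *v w) $ k) / (\<beta> * (M *v ones) $ k)
                         else - (M *v w) $ i + ((M *v ones) $ i / (M *v ones) $ k) * dz ((M *v w) $ k));
                 z0 = - (matrix_inv R *v (u0 + P *v x0))
             in is_equilibrium B P R \<beta> w x0 z0))"
proof -
  have invB: "invertible B" using dom by (rule strictly_row_dominant_imp_invertible)
  have invR: "invertible R" using R_diag R_pos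
    by (intro strictly_row_dominant_imp_invertible diagonal_imp_strictly_row_dominant)
      (simp, metis less_irrefl)
  have Be: "B *v (M *v ones) = ones" and Bm: "B *v (M *v w) = w"
    unfolding M_def by (simp_all add: matrix_inv_cancel_right[OF invB])
  have e_pos: "\<forall>j. 0 < (M *v ones)$j"
    using strictly_row_dominant_Z_matrix_solution_pos[OF dom diag_pos _ _ Be] offdiag_neg
    by (auto simp: ones_def less_imp_le)
  have sep: "\<forall>i j. ((M *v w)$i - 1) / (M *v ones)$i < ((M *v w)$j + 1) / (M *v ones)$j"
    using Max_range_less_Min_range[OF A1] by blast
  note setting = invB invR Be Bm e_pos sep beta_pos
  obtain k where "\<forall>j. \<bar>dz ((M *v w)$j) / (M *v ones)$j\<bar> \<le> \<bar>dz ((M *v w)$k) / (M *v ones)$k\<bar>"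
    using ex_argmax_finite[of "\<lambda>j. \<bar>dz ((M *v w)$j) / (M *v ones)$j\<bar>"] by blast
  from is_equilibrium_at_argmax[OF setting this]
  have "\<exists>p. is_equilibrium B P R \<beta> w (fst p) (snd p)"
    unfolding Let_def split_paired_Ex fst_conv snd_conv by blast
  moreover have "p = p'" if "is_equilibrium B P R \<beta> w (fst p) (snd p)"
    and "is_equilibrium B P R \<beta> w (fst p') (snd p')" for p p'
    using is_equilibrium_unique[OF setting A2 that] by (simp add: prod_eq_iff)
  ultimately have "\<exists>!p. is_equilibrium B P R \<beta> w (fst p) (snd p)" by (rule ex_ex1I)
  moreover have "\<forall>j. \<bar>dz ((M *v w)$j) / (M *v ones)$j\<bar> \<le> \<bar>dz ((M *v w)$k) / (M *v ones)$k\<bar>"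
    if "dzv (M *v w) = 0" for k
    using that by (simp add: dzv_def vec_eq_iff)
  ultimately show ?thesis
    using is_equilibrium_at_argmax[OF setting] by blast
qed

end
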